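(* Let $p\in(1,\infty)$, let $\mathbf{A}=[\boldsymbol{a}_1,\dots,\boldsymbol{a}_m]^T\in\mathbb{R}^{m\times n}$ with entries $a_{ij}$, and let $\mathbf{y}\in\mathbb{R}^m$, and assume every column of $\mathbf{A}$ has at least one nonzero entry. Define $f_{LR}(\boldsymbol{x})=\sum_{i=1}^m |y_i-\boldsymbol{a}_i^T\boldsymbol{x}|^p$ for $\boldsymbol{x}\in\mathbb{R}^n$. Starting from an arbitrary $\boldsymbol{x}^0\in\mathbb{R}^n$, generate a sequence $\{\boldsymbol{x}^k\}$ (the PROMPT iteration) as follows: given $\boldsymbol{x}^k$, for each $j=1,\dots,n$ set $$x_j^{k+1}\in\underset{x_j\in\mathbb{R}}{\arg\min}\sum_{\substack{i=1\\ a_{ij}\neq 0}}^{m} |a_{ij}|^{p}\,\bigl|x_j-s_{ij}^k\bigr|^{p},\qquad s_{ij}^k = x_j^k+\frac{y_i-\boldsymbol{a}_i^T\boldsymbol{x}^k}{(n+1)\,a_{ij}}.$$ Then the sequence $\{f_{LR}(\boldsymbol{x}^k)\}$ is monotonically non-increasing (and hence converges to a finite value), and every limit point of $\{\boldsymbol{x}^k\}$ is a stationary point of $f_{LR}$.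
   Context: This update is the minimization of the majorizer of $f_{LR}$ obtained by writing $y_i-\boldsymbol{a}_i^T\boldsymbol{x}=\boldsymbol{c}_i^T\tilde{\boldsymbol{x}}$ with $\boldsymbol{c}_i=[-\boldsymbol{a}_i^T,\ y_i]^T$, $\tilde{\boldsymbol{x}}=[\boldsymbol{x}^T,1]^T$, and applying Jensen's inequality $|\boldsymbol{c}^T\tilde{\boldsymbol{x}}|^p\le \sum_{j=1}^{n+1}\frac{1}{n+1}|(n+1)c_j(\tilde x_j-\tilde x_j^k)+\boldsymbol{c}^T\tilde{\boldsymbol{x}}^k|^p$; the resulting surrogate is separable in the coordinates $x_j$. *)

theory Defs
  imports "HOL-Analysis.Analysis"
begin

definition f_LR :: "real \<Rightarrow> real^'n^'m \<Rightarrow> real^'m \<Rightarrow> real^'n \<Rightarrow> real" where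
  "f_LR p A y x = (\<Sum>i\<in>UNIV. \<bar>y $ i - A $ i \<bullet> x\<bar> powr p)"

definition prompt_s :: "real^'n^'m \<Rightarrow> real^'m \<Rightarrow> real^'n \<Rightarrow> 'm \<Rightarrow> 'n \<Rightarrow> real" where
  "prompt_s A y xk i j = xk $ j + (y $ i - A $ i \<bullet> xk) / ((real CARD('n) + 1) * A $ i $ j)"

definition prompt_obj :: "real \<Rightarrow> real^'n^'m \<Rightarrow> real^'m \<Rightarrow> real^'n \<Rightarrow> 'n \<Rightarrow> real \<Rightarrow> real" where
  "prompt_obj p A y xk j t =
     (\<Sum>i\<in>{i. A $ i $ j \<noteq> 0}. \<bar>A $ i $ j\<bar> powr p * \<bar>t - prompt_s A y xk i j\<bar> powr p)"

definition stationary_point :: "(real^'n \<Rightarrow> real) \<Rightarrow> real^'n \<Rightarrow> bool" where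
  "stationary_point f x \<longleftrightarrow> (f has_derivative (\<lambda>h. 0)) (at x)"

definition seq_limit_point :: "(nat \<Rightarrow> 'a::topological_space) \<Rightarrow> 'a \<Rightarrow> bool" where
  "seq_limit_point X l \<longleftrightarrow> (\<exists>r. strict_mono r \<and> (X \<circ> r) \<longlonglongrightarrow> l)"

end

theory Submission
  imports Defs
begin

text \<open>
  Write r_i(x) = y_i - a_i^T x and N = n + 1. The residual r_i(z) is the mean of the N numbers
  r_i(x) and r_i(x) - N a_ij (z_j - x_j), j = 1..n, so Jensen's inequality for the convex
  function |t|^p yields a surrogate G(x, z) >= f_LR(z) with G(x, x) = f_LR(x); and G(x, -)
  separates into the coordinatewise PROMPT objectives, so a PROMPT step minimises G(x^k, -).
  Hence f_LR decreases along the iterates. Passing to the limit along a subsequence, a limit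
  point l minimises G(l, -); since G(l, -) - f_LR is minimal at l as well, the derivative of
  f_LR vanishes at l.
\<close>

lemma abs_powr_has_real_derivative:
  assumes p: "1 < (p::real)"
  shows "((\<lambda>t::real. \<bar>t\<bar> powr p) has_real_derivative (p * sgn t * \<bar>t\<bar> powr (p - 1))) (at t)"
proof (cases "t = 0")
  case True
  have lim: "((\<lambda>h::real. \<bar>h\<bar> powr (p - 1)) \<longlongrightarrow> 0) (at 0)"
    by (rule tendsto_zero_powrI) (auto intro!: tendsto_eq_intros simp: p)
  have "((\<lambda>h::real. (\<bar>h\<bar> powr p - \<bar>0\<bar> powr p) / (h - 0)) \<longlongrightarrow> 0) (at 0)"
  proof (rule tendsto_norm_zero_cancel, rule Lim_transform_eventually[OF lim])
    show "\<forall>\<^sub>F h in at (0::real). \<bar>h\<bar> powr (p - 1) = norm ((\<bar>h\<bar> powr p - \<bar>0\<bar> powr p) / (h - 0))"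
      unfolding eventually_at_filter by (auto simp: powr_diff p)
  qed
  then show ?thesis
    using True by (simp add: has_field_derivative_iff)
next
  case False
  then consider "0 < t" | "t < 0"
    by linarith
  then show ?thesis
  proof cases
    case 1
    have "((\<lambda>t::real. t powr p) has_real_derivative (p * t powr (p - 1))) (at t)"
      using 1 by (auto intro!: derivative_eq_intros)
    then have "((\<lambda>t::real. \<bar>t\<bar> powr p) has_real_derivative (p * t powr (p - 1))) (at t)"
      by (rule has_field_derivative_transform_within_open[where S="{0<..}"]) (use 1 in auto)
    then show ?thesis
      using 1 by simp
  next
    case 2
    have "((\<lambda>t::real. (- t) powr p) has_real_derivative (p * (- t) powr (p - 1) * (- 1))) (at t)"
      using 2 by (auto intro!: derivative_eq_intros)
    then have "((\<lambda>t::real. \<bar>t\<bar> powr p) has_real_derivative (p * (- t) powr (p - 1) * (- 1))) (at t)"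
      by (rule has_field_derivative_transform_within_open[where S="{..<0}"]) (use 2 in auto)
    then show ?thesis
      using 2 by simp
  qed
qed

lemma convex_on_abs_powr:
  assumes p: "1 < (p::real)"
  shows "convex_on UNIV (\<lambda>t::real. \<bar>t\<bar> powr p)"
proof (rule convex_on_realI[OF _ abs_powr_has_real_derivative[OF p]])
  fix s t :: real
  assume "s \<le> t"
  consider "0 \<le> s" | "t \<le> 0" | "s < 0" "0 < t"
    by linarith
  then show "p * sgn s * \<bar>s\<bar> powr (p - 1) \<le> p * sgn t * \<bar>t\<bar> powr (p - 1)"
  proof cases
    case 1
    then have "\<bar>s\<bar> powr (p - 1) \<le> \<bar>t\<bar> powr (p - 1)"
      using \<open>s \<le> t\<close> p by (intro powr_mono2) auto
    then show ?thesis
      using 1 \<open>s \<le> t\<close> p by (cases "s = 0"; cases "t = 0") (auto simp: sgn_if)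
  next
    case 2
    then have "\<bar>t\<bar> powr (p - 1) \<le> \<bar>s\<bar> powr (p - 1)"
      using \<open>s \<le> t\<close> p by (intro powr_mono2) auto
    then show ?thesis
      using 2 \<open>s \<le> t\<close> p by (cases "s = 0"; cases "t = 0") (auto simp: sgn_if)
  next
    case 3
    have "0 \<le> p * \<bar>s\<bar> powr (p - 1)" "0 \<le> p * \<bar>t\<bar> powr (p - 1)"
      using p by auto
    then show ?thesis
      using 3 by (simp add: sgn_if)
  qed
qed simp

lemma differentiable_abs_powr:
  assumes p: "1 < (p::real)" and u: "u differentiable (at w)"
  shows "(\<lambda>w. \<bar>u w\<bar> powr p) differentiable (at w)"
proof -
  have "(\<lambda>t::real. \<bar>t\<bar> powr p) differentiable (at (u w))"
    using abs_powr_has_real_derivative[OF p] real_differentiable_def by blast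
  from differentiable_compose[OF this u] show ?thesis
    by (simp add: o_def)
qed

lemma abs_powr_mean_le:
  fixes v :: "'a \<Rightarrow> real"
  assumes p: "1 < p" and I: "finite I" "I \<noteq> {}"
  shows "\<bar>(\<Sum>i\<in>I. v i) / card I\<bar> powr p \<le> (\<Sum>i\<in>I. \<bar>v i\<bar> powr p) / card I"
proof -
  have "\<bar>\<Sum>i\<in>I. (1 / card I) *\<^sub>R v i\<bar> powr p \<le> (\<Sum>i\<in>I. 1 / card I * \<bar>v i\<bar> powr p)"
    by (rule convex_on_sum[OF I convex_on_abs_powr[OF p]]) (use I in auto)
  then show ?thesis
    by (simp add: sum_divide_distrib)
qed

text \<open>The extra point v0 plays the role of the constant coordinate x_(n+1) = 1 of the paper.\<close>

lemma abs_powr_mean_le_option: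
  fixes v :: "'n::finite \<Rightarrow> real"
  assumes p: "1 < p"
  shows "\<bar>(v0 + (\<Sum>j\<in>UNIV. v j)) / (real CARD('n) + 1)\<bar> powr p
         \<le> (\<bar>v0\<bar> powr p + (\<Sum>j\<in>UNIV. \<bar>v j\<bar> powr p)) / (real CARD('n) + 1)"
proof -
  have sum_option: "(\<Sum>w\<in>UNIV. g w) = g None + (\<Sum>j\<in>UNIV. g (Some j))" for g :: "'n option \<Rightarrow> real"
    by (simp add: UNIV_option_conv sum.reindex)
  have card_option: "real CARD('n option) = real CARD('n) + 1"
    by (simp add: UNIV_option_conv card_image)
  from abs_powr_mean_le[OF p, of "UNIV :: 'n option set" "case_option v0 v"] show ?thesis
    by (simp add: sum_option card_option add.commute)
qed

locale majorization =
  fixes f :: "'a::real_normed_vector \<Rightarrow> real" and G :: "'a \<Rightarrow> 'a \<Rightarrow> real"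
  assumes G_diag [simp]: "G x x = f x"
    and f_le_G: "f z \<le> G x z"
begin

lemma descent:
  assumes "G x x' \<le> G x x"
  shows "f x' \<le> f x"
  using f_le_G[of x' x] assms by simp

lemma convergent_descent:
  assumes step: "\<And>k. G (X k) (X (Suc k)) \<le> G (X k) (X k)" and bounded: "\<And>x. B \<le> f x"
  shows "convergent (\<lambda>k. f (X k))"
proof -
  have "decseq (\<lambda>k. f (X k))"
    using descent[OF step] by (rule decseq_SucI)
  then obtain L where "(\<lambda>k. f (X k)) \<longlonglongrightarrow> L"
    by (rule decseq_convergent) (use bounded in blast)
  then show ?thesis
    by (rule convergentI)
qed

lemma limit_point_minimizes:
  assumes step: "\<And>k z. G (X k) (X (Suc k)) \<le> G (X k) z"
    and conv: "convergent (\<lambda>k. f (X k))"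
    and cont_f: "isCont f l" and cont_G: "isCont (\<lambda>w. G w z) l"
    and lp: "seq_limit_point X l"
  shows "G l l \<le> G l z"
proof -
  obtain r where r: "strict_mono r" and lim: "(X \<circ> r) \<longlonglongrightarrow> l"
    using lp unfolding seq_limit_point_def by blast
  obtain L where L: "(\<lambda>k. f (X k)) \<longlonglongrightarrow> L"
    using conv by (auto simp: convergent_def)
  have "(\<lambda>k. f (X k) - f (X (Suc k))) \<longlonglongrightarrow> 0"
    using tendsto_diff[OF L LIMSEQ_Suc[OF L]] by simp
  then have gap: "(\<lambda>k. f (X (r k)) - f (X (Suc (r k)))) \<longlonglongrightarrow> 0"
    using LIMSEQ_subseq_LIMSEQ[OF _ r] by (fastforce simp: o_def)
  have "(\<lambda>k. f (X (r k)) - G (X (r k)) z) \<longlonglongrightarrow> f l - G l z"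
    using isCont_tendsto_compose[OF cont_f lim] isCont_tendsto_compose[OF cont_G lim]
    by (intro tendsto_diff) (simp_all add: o_def)
  moreover have "f (X (r k)) - G (X (r k)) z \<le> f (X (r k)) - f (X (Suc (r k)))" for k
    using f_le_G[of "X (Suc (r k))" "X (r k)"] step[of "r k" z] by simp
  ultimately have "f l - G l z \<le> 0"
    using gap by (intro LIMSEQ_le) blast+
  then show ?thesis
    by simp
qed

lemma has_derivative_zero_at_surrogate_minimum:
  assumes f: "f differentiable (at l)" and G: "G l differentiable (at l)"
    and min: "\<And>z. G l l \<le> G l z"
  shows "(f has_derivative (\<lambda>h. 0)) (at l)"
proof -
  obtain D where D: "(f has_derivative D) (at l)"
    using f by (auto simp: differentiable_def)
  obtain E where E: "(G l has_derivative E) (at l)"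
    using G by (auto simp: differentiable_def)
  have E0: "E = (\<lambda>h. 0)"
    by (rule has_derivative_local_min[OF E], rule always_eventually) (use min in blast)
  have "(\<lambda>h. E h - D h) = (\<lambda>h. 0)"
  proof (rule has_derivative_local_min[OF has_derivative_diff[OF E D]])
    show "\<forall>\<^sub>F z in at l. G l l - f l \<le> G l z - f z"
      using f_le_G[of _ l] by simp
  qed
  then have "D = (\<lambda>h. 0)"
    using E0 by (simp add: fun_eq_iff)
  with D show ?thesis
    by simp
qed

lemma limit_point_stationary:
  assumes step: "\<And>k z. G (X k) (X (Suc k)) \<le> G (X k) z"
    and conv: "convergent (\<lambda>k. f (X k))"
    and f: "f differentiable (at l)" and G: "G l differentiable (at l)"
    and cont_G: "\<And>z. isCont (\<lambda>w. G w z) l"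
    and lp: "seq_limit_point X l"
  shows "(f has_derivative (\<lambda>h. 0)) (at l)"
proof (rule has_derivative_zero_at_surrogate_minimum[OF f G])
  show "G l l \<le> G l z" for z
    using step conv differentiable_imp_continuous_within[OF f] cont_G lp
    by (rule limit_point_minimizes)
qed

end

definition residual :: "real^'n^'m \<Rightarrow> real^'m \<Rightarrow> real^'n \<Rightarrow> 'm \<Rightarrow> real" where
  "residual A y x i = y $ i - A $ i \<bullet> x"

text \<open>The paper's Jensen majorizer at x = x^k: the term for coordinate j <= n is
  |(n+1) c_ij (z_j - x_j) + c_i^T x~|^p with c_ij = -a_ij and c_i^T x~ = r_i(x); the constant
  coordinate n+1 contributes |r_i(x)|^p.\<close>

definition prompt_majorizer :: "real \<Rightarrow> real^'n^'m \<Rightarrow> real^'m \<Rightarrow> real^'n \<Rightarrow> real^'n \<Rightarrow> real" where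
  "prompt_majorizer p A y x z =
     (\<Sum>i\<in>UNIV. \<bar>residual A y x i\<bar> powr p +
        (\<Sum>j\<in>UNIV. \<bar>residual A y x i - (real CARD('n) + 1) * A $ i $ j * (z $ j - x $ j)\<bar> powr p))
     / (real CARD('n) + 1)"

lemma f_LR_eq_sum_residual: "f_LR p A y x = (\<Sum>i\<in>UNIV. \<bar>residual A y x i\<bar> powr p)"
  by (simp add: f_LR_def residual_def)

lemma prompt_majorizer_diag:
  fixes A :: "real^'n^'m"
  shows "prompt_majorizer p A y x x = f_LR p A y x"
proof -
  have "(a + real CARD('n) * a) / (real CARD('n) + 1) = a" for a :: real
    by (simp add: field_simps)
  then show ?thesis
    by (simp add: prompt_majorizer_def f_LR_eq_sum_residual sum_divide_distrib)
qed

lemma residual_eq_mean: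
  fixes A :: "real^'n^'m"
  shows "residual A y z i = (residual A y x i +
           (\<Sum>j\<in>UNIV. residual A y x i - (real CARD('n) + 1) * A $ i $ j * (z $ j - x $ j)))
         / (real CARD('n) + 1)"
proof -
  let ?N = "real CARD('n) + 1"
  have "A $ i \<bullet> z - A $ i \<bullet> x = (\<Sum>j\<in>UNIV. A $ i $ j * (z $ j - x $ j))"
    by (simp add: inner_vec_def right_diff_distrib sum_subtractf)
  moreover have "(\<Sum>j\<in>UNIV. residual A y x i - ?N * A $ i $ j * (z $ j - x $ j))
      = real CARD('n) * residual A y x i - ?N * (\<Sum>j\<in>UNIV. A $ i $ j * (z $ j - x $ j))"
    by (simp add: sum_subtractf sum_distrib_left mult.assoc)
  ultimately have "residual A y x i +
        (\<Sum>j\<in>UNIV. residual A y x i - ?N * A $ i $ j * (z $ j - x $ j))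
      = ?N * residual A y x i - ?N * (A $ i \<bullet> z - A $ i \<bullet> x)"
    by (simp add: algebra_simps)
  also have "\<dots> = ?N * residual A y z i"
    by (simp add: residual_def algebra_simps)
  finally show ?thesis
    by simp
qed

lemma f_LR_le_prompt_majorizer:
  assumes p: "1 < p"
  shows "f_LR p A y z \<le> prompt_majorizer p A y x z"
  unfolding f_LR_eq_sum_residual prompt_majorizer_def sum_divide_distrib
  by (intro sum_mono) (subst residual_eq_mean[of _ _ _ _ x], rule abs_powr_mean_le_option[OF p])

lemma prompt_term_eq:
  fixes A :: "real^'n^'m"
  assumes "A $ i $ j \<noteq> 0"
  shows "\<bar>residual A y x i - (real CARD('n) + 1) * A $ i $ j * (t - x $ j)\<bar> powr p
       = (real CARD('n) + 1) powr p * (\<bar>A $ i $ j\<bar> powr p * \<bar>t - prompt_s A y x i j\<bar> powr p)"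
proof -
  let ?N = "real CARD('n) + 1"
  have "prompt_s A y x i j = x $ j + residual A y x i / (?N * A $ i $ j)"
    by (simp add: prompt_s_def residual_def)
  moreover have "?N * A $ i $ j \<noteq> 0"
    using assms by simp
  ultimately have "residual A y x i - ?N * A $ i $ j * (t - x $ j) = - (?N * A $ i $ j * (t - prompt_s A y x i j))"
    by (simp add: field_simps)
  then have "\<bar>residual A y x i - ?N * A $ i $ j * (t - x $ j)\<bar> = ?N * (\<bar>A $ i $ j\<bar> * \<bar>t - prompt_s A y x i j\<bar>)"
    by (simp only: abs_minus_cancel abs_mult)
  then show ?thesis
    by (simp add: powr_mult)
qed

lemma sum_prompt_terms:
  fixes A :: "real^'n^'m"
  shows "(\<Sum>i\<in>UNIV. \<bar>residual A y x i - (real CARD('n) + 1) * A $ i $ j * (t - x $ j)\<bar> powr p)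
       = (\<Sum>i\<in>{i. A $ i $ j = 0}. \<bar>residual A y x i\<bar> powr p)
         + (real CARD('n) + 1) powr p * prompt_obj p A y x j t"
proof -
  have "(\<Sum>i\<in>UNIV. \<bar>residual A y x i - (real CARD('n) + 1) * A $ i $ j * (t - x $ j)\<bar> powr p)
     = (\<Sum>i\<in>UNIV. if A $ i $ j = 0 then \<bar>residual A y x i\<bar> powr p
          else (real CARD('n) + 1) powr p * (\<bar>A $ i $ j\<bar> powr p * \<bar>t - prompt_s A y x i j\<bar> powr p))"
    using prompt_term_eq by (intro sum.cong) auto
  then show ?thesis
    by (simp add: sum.If_cases prompt_obj_def sum_distrib_left Compl_eq)
qed

lemma prompt_majorizer_separable:
  fixes A :: "real^'n^'m"
  obtains C where "\<And>z. prompt_majorizer p A y x z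
    = C + (real CARD('n) + 1) powr p / (real CARD('n) + 1) * (\<Sum>j\<in>UNIV. prompt_obj p A y x j (z $ j))"
proof
  fix z :: "real^'n"
  let ?N = "real CARD('n) + 1"
  have "prompt_majorizer p A y x z = ((\<Sum>i\<in>UNIV. \<bar>residual A y x i\<bar> powr p) +
     (\<Sum>j\<in>UNIV. \<Sum>i\<in>UNIV. \<bar>residual A y x i - ?N * A $ i $ j * (z $ j - x $ j)\<bar> powr p)) / ?N"
    unfolding prompt_majorizer_def sum.distrib by (subst sum.swap) (rule refl)
  also have "\<dots> = ((\<Sum>i\<in>UNIV. \<bar>residual A y x i\<bar> powr p)
      + (\<Sum>j\<in>UNIV. \<Sum>i\<in>{i. A $ i $ j = 0}. \<bar>residual A y x i\<bar> powr p)) / ?N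
      + ?N powr p / ?N * (\<Sum>j\<in>UNIV. prompt_obj p A y x j (z $ j))"
    by (simp add: sum_prompt_terms sum.distrib sum_distrib_left add_divide_distrib sum_divide_distrib)
  finally show "prompt_majorizer p A y x z = \<dots>" .
qed

lemma prompt_majorizer_minimal:
  fixes A :: "real^'n^'m"
  assumes "\<And>j t. prompt_obj p A y x j (x' $ j) \<le> prompt_obj p A y x j t"
  shows "prompt_majorizer p A y x x' \<le> prompt_majorizer p A y x z"
proof -
  obtain C where C: "\<And>z. prompt_majorizer p A y x z
    = C + (real CARD('n) + 1) powr p / (real CARD('n) + 1) * (\<Sum>j\<in>UNIV. prompt_obj p A y x j (z $ j))"
    using prompt_majorizer_separable[of p A y x] by blast
  have "(\<Sum>j\<in>UNIV. prompt_obj p A y x j (x' $ j)) \<le> (\<Sum>j\<in>UNIV. prompt_obj p A y x j (z $ j))"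
    using assms by (intro sum_mono)
  then show ?thesis
    unfolding C by (intro add_left_mono mult_left_mono) simp_all
qed

lemma differentiable_f_LR:
  fixes A :: "real^'n^'m"
  assumes p: "1 < p"
  shows "f_LR p A y differentiable (at w)"
  unfolding f_LR_def[abs_def]
  by (intro differentiable_sum ballI differentiable_abs_powr[OF p]) simp_all

lemma differentiable_prompt_majorizer:
  fixes A :: "real^'n^'m"
  assumes p: "1 < p"
  shows "prompt_majorizer p A y x differentiable (at w)"
    and "(\<lambda>x. prompt_majorizer p A y x z) differentiable (at w)"
  unfolding prompt_majorizer_def[abs_def] residual_def
  by (intro differentiable_sum differentiable_divide ballI differentiable_abs_powr[OF p]
      differentiable_add differentiable_diff differentiable_mult differentiable_const
      differentiable_inner bounded_linear_imp_differentiable bounded_linear_vec_nth; simp)+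

lemma majorization_prompt_majorizer:
  assumes "1 < p"
  shows "majorization (f_LR p A y) (prompt_majorizer p A y)"
  using assms by unfold_locales (simp_all add: prompt_majorizer_diag f_LR_le_prompt_majorizer)

theorem mainTheorem2:
  fixes p :: real and A :: "real^'n^'m" and y :: "real^'m" and x :: "nat \<Rightarrow> real^'n"
  assumes p_gt: "1 < p"
    and cols: "\<forall>j. \<exists>i. A $ i $ j \<noteq> 0"
    and step: "\<forall>k j t. prompt_obj p A y (x k) j (x (Suc k) $ j) \<le> prompt_obj p A y (x k) j t"
  shows "(\<forall>k. f_LR p A y (x (Suc k)) \<le> f_LR p A y (x k))
       \<and> convergent (\<lambda>k. f_LR p A y (x k))
       \<and> (\<forall>l. seq_limit_point x l \<longrightarrow> stationary_point (f_LR p A y) l)"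
proof -
  \<comment> \<open>cols only guarantees that the minimisers in step exist.\<close>
  interpret majorization "f_LR p A y" "prompt_majorizer p A y"
    using p_gt by (rule majorization_prompt_majorizer)
  have mm_step: "prompt_majorizer p A y (x k) (x (Suc k)) \<le> prompt_majorizer p A y (x k) z" for k z
    using step by (intro prompt_majorizer_minimal) blast
  have decreasing: "f_LR p A y (x (Suc k)) \<le> f_LR p A y (x k)" for k
    using mm_step by (rule descent)
  have convergent: "convergent (\<lambda>k. f_LR p A y (x k))"
    using mm_step by (rule convergent_descent[where B=0]) (simp add: f_LR_def sum_nonneg)
  have "stationary_point (f_LR p A y) l" if "seq_limit_point x l" for l
    unfolding stationary_point_def
    using mm_step convergent differentiable_f_LR[OF p_gt] differentiable_prompt_majorizer(1)[OF p_gt]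
      differentiable_imp_continuous_within[OF differentiable_prompt_majorizer(2)[OF p_gt]] that
    by (rule limit_point_stationary)
  with decreasing convergent show ?thesis
    by blast
qed

end
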